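(* Let $X_n,Y_n,Z_n,W_n$ be chosen as real numbers with $Q_n(1)=1$, $Q_n'(1)=1$, $Q_n(s^\nu)=s^\nu$, $Q_n'(s^\nu)=1$ and with $(X_n-1)/s^\nu$, $Y_n/s^\nu$, $(Z_n-1)/s^\nu$, $W_n/s^\nu$ converging as $s\to0^+$ to $\frac{d_1(d_1-3)(d_n-1)}{(d_1-1)^2d_n}$, $\frac{2d_1(d_n-1)}{(d_1-1)d_n}$, $0$, $\frac{d_n-1}{d_n}$ respectively. Let $\varphi(z)=s^\nu/z$ and $\widehat Q_n=\varphi\circ Q_n\circ\varphi^{-1}$. Then, as $s\to0^+$, $Q_n\to h_{d_1}$ and $\widehat Q_n\to h_{d_n}$ locally uniformly on $\widehat{\mathbb{C}}\setminus\{0\}$, where $h_d(z)=\frac{dz^d}{(d-1)z^d+1}$.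
   Context: $n\ge3$ odd, $d_1,\dots,d_n$ positive integers with $\sum1/d_i<1$, $d_{\max}=\max_id_i$, $D_i=d_i+d_{i+1}$, $\tau=\bigl(d_1d_nd_{\max}^{2(d_1-d_n)/d_1}\bigr)^{1/\sum_{i=1}^{n-1}(d_n/d_i)}$, $\nu=\frac{d_n}{d_n-1}\sum_{i=1}^{n-1}\frac1{d_i}$, $b_1=(d_{\max}^2\tau s)^{1/d_1}$, $b_i=(\tau s)^{1/d_i}b_{i-1}$, and $Q_n(z)=\frac{d_1z^{d_n}}{(d_1-1)X_nz^{d_1}+Y_nz+Z_n}\prod_{i=1}^{n-1}(z^{D_i}-b_i^{D_i})^{(-1)^{i-1}}+W_n$. Such $X_n,\dots,W_n$ exist for small $s$. *)

theory Defs
  imports "HOL-Analysis.Analysis"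
begin

definition dmax :: "nat \<Rightarrow> (nat \<Rightarrow> nat) \<Rightarrow> real" where
  "dmax n d = real (Max (d ` {1..n}))"

definition tau :: "nat \<Rightarrow> (nat \<Rightarrow> nat) \<Rightarrow> real" where
  "tau n d = (real (d 1) * real (d n) *
      dmax n d powr (2 * (real (d 1) - real (d n)) / real (d 1)))
      powr (1 / (\<Sum>i=1..n-1. real (d n) / real (d i)))"

definition nu :: "nat \<Rightarrow> (nat \<Rightarrow> nat) \<Rightarrow> real" where
  "nu n d = real (d n) / (real (d n) - 1) * (\<Sum>i=1..n-1. 1 / real (d i))"

text \<open>b_1 = (dmax^2 tau s)^(1/d_1), b_i = (tau s)^(1/d_i) b_(i-1); index 0 unused.\<close>
fun bcoef :: "nat \<Rightarrow> (nat \<Rightarrow> nat) \<Rightarrow> real \<Rightarrow> nat \<Rightarrow> real" where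
  "bcoef n d s 0 = 1"
| "bcoef n d s (Suc i) =
     (if i = 0 then (dmax n d ^ 2 * tau n d * s) powr (1 / real (d 1))
      else (tau n d * s) powr (1 / real (d (Suc i))) * bcoef n d s i)"

definition DD :: "(nat \<Rightarrow> nat) \<Rightarrow> nat \<Rightarrow> nat" where
  "DD d i = d i + d (Suc i)"

definition Qn :: "nat \<Rightarrow> (nat \<Rightarrow> nat) \<Rightarrow> real \<Rightarrow> real \<Rightarrow> real \<Rightarrow> real \<Rightarrow> real \<Rightarrow> complex \<Rightarrow> complex" where
  "Qn n d s X Y Z W z =
     of_nat (d 1) * z ^ d n /
       ((of_nat (d 1) - 1) * of_real X * z ^ d 1 + of_real Y * z + of_real Z) *
     (\<Prod>i=1..n-1. (z ^ DD d i - of_real (bcoef n d s i) ^ DD d i) powi ((-1) ^ (i - 1)))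
     + of_real W"

text \<open>Points where the formula for Q_n has no vanishing denominator (so its value is the
  finite value of the rational map there).\<close>
definition Qn_regular :: "nat \<Rightarrow> (nat \<Rightarrow> nat) \<Rightarrow> real \<Rightarrow> real \<Rightarrow> real \<Rightarrow> real \<Rightarrow> complex \<Rightarrow> bool" where
  "Qn_regular n d s X Y Z z \<longleftrightarrow>
     (of_nat (d 1) - 1) * of_real X * z ^ d 1 + of_real Y * z + of_real Z \<noteq> 0 \<and>
     (\<forall>i\<in>{1..n-1}. even i \<longrightarrow> z ^ DD d i - of_real (bcoef n d s i) ^ DD d i \<noteq> 0)"

text \<open>Conjugated map: phi o Q_n o phi^-1 with phi z = s^nu / z (phi is an involution).\<close>
definition Qhat :: "nat \<Rightarrow> (nat \<Rightarrow> nat) \<Rightarrow> real \<Rightarrow> real \<Rightarrow> real \<Rightarrow> real \<Rightarrow> real \<Rightarrow> complex \<Rightarrow> complex" where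
  "Qhat n d s X Y Z W z =
     of_real (s powr nu n d) / Qn n d s X Y Z W (of_real (s powr nu n d) / z)"

definition Qhat_regular :: "nat \<Rightarrow> (nat \<Rightarrow> nat) \<Rightarrow> real \<Rightarrow> real \<Rightarrow> real \<Rightarrow> real \<Rightarrow> real \<Rightarrow> complex \<Rightarrow> bool" where
  "Qhat_regular n d s X Y Z W z \<longleftrightarrow>
     z \<noteq> 0 \<and> Qn_regular n d s X Y Z (of_real (s powr nu n d) / z) \<and>
     Qn n d s X Y Z W (of_real (s powr nu n d) / z) \<noteq> 0"

definition hmap :: "nat \<Rightarrow> complex \<Rightarrow> complex" where
  "hmap dd z = of_nat dd * z ^ dd / ((of_nat dd - 1) * z ^ dd + 1)"

definition h_regular :: "nat \<Rightarrow> complex \<Rightarrow> bool" where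
  "h_regular dd z \<longleftrightarrow> (of_nat dd - 1) * z ^ dd + 1 \<noteq> (0::complex)"

definition chordal :: "complex \<Rightarrow> complex \<Rightarrow> real" where
  "chordal a b = 2 * cmod (a - b) / (sqrt (1 + (cmod a)\<^sup>2) * sqrt (1 + (cmod b)\<^sup>2))"

text \<open>The compact sets {|z| \<ge> r} \<union> {\<infinity>} exhaust the sphere minus 0; the supremum is
  taken over the dense set of finite points where both formulas are regular (all maps are
  continuous into the sphere, and the excluded sets are finite).\<close>
definition loc_unif_conv_sphere ::
  "(real \<Rightarrow> complex \<Rightarrow> complex) \<Rightarrow> (real \<Rightarrow> complex \<Rightarrow> bool) \<Rightarrow>
   (complex \<Rightarrow> complex) \<Rightarrow> (complex \<Rightarrow> bool) \<Rightarrow> bool" where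
  "loc_unif_conv_sphere F Freg G Greg \<longleftrightarrow>
     (\<forall>r>0. \<forall>\<epsilon>>0. \<forall>\<^sub>F s in at_right 0.
        \<forall>z. r \<le> cmod z \<longrightarrow> Freg s z \<longrightarrow> Greg z \<longrightarrow> chordal (F s z) (G z) < \<epsilon>)"

end

theory Submission
  imports Defs
begin

text \<open>
  Each b_i is a constant multiple of s powr beta_i with beta_i = 1/d_1 + ... + 1/d_i;
  since beta_i < nu for i < n, both b_i and s^nu / b_i tend to 0.  The exponents
  (-1)^(i-1) D_i telescope to d_1 - d_n, so for z \<noteq> 0
    Q_n(z) = d_1 rho(z) / ((d_1 - 1) X + Y / z^(d_1 - 1) + Z / z^d_1) + W
  where rho(z) = \<Prod>i (1 - (b_i/z)^D_i)^((-1)^(i-1)) tends to 1 uniformly on |z| \<ge> r;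
  as X, Z \<rightarrow> 1 and Y, W \<rightarrow> 0 this gives Q_n \<rightarrow> h_d_1.  Near 0 one factors out the
  b_i^D_i instead: tau is chosen exactly so that \<Prod>i b_i^((-1)^(i-1) D_i) * s^(nu d_n)
  = s^nu / (d_1 d_n), which turns 1 / Q_n(s^nu / z) into z^(-d_n) rho'(z) / (d_n D(z)) + W / s^nu
  with rho', D \<rightarrow> 1; since W / s^nu \<rightarrow> (d_n - 1) / d_n this gives Q_n-hat \<rightarrow> h_d_n.
  Only the limits of X, Y, Z, W enter: the normalisation conditions on Q_n merely
  determine them.
\<close>

section \<open>Chordal distance and locally uniform convergence\<close>

lemma chordal_le_norm_diff: "chordal a b \<le> 2 * cmod (a - b)"
proof -
  have "1 \<le> sqrt (1 + (cmod a)\<^sup>2)" "1 \<le> sqrt (1 + (cmod b)\<^sup>2)" by auto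
  from mult_mono[OF this] have "1 \<le> sqrt (1 + (cmod a)\<^sup>2) * sqrt (1 + (cmod b)\<^sup>2)"
    by simp
  then show ?thesis
    unfolding chordal_def by (simp add: divide_le_eq mult_le_cancel_left1)
qed

lemma chordal_inverse:
  assumes "a \<noteq> 0" "b \<noteq> 0"
  shows "chordal (1/a) (1/b) = chordal a b"
proof -
  have sqrt_inv: "sqrt (1 + (cmod (1/x))\<^sup>2) = sqrt (1 + (cmod x)\<^sup>2) / cmod x" if "x \<noteq> 0" for x
  proof -
    have "1 + (cmod (1/x))\<^sup>2 = (1 + (cmod x)\<^sup>2) / (cmod x)\<^sup>2"
      using that by (simp add: norm_divide field_simps)
    then show ?thesis by (simp add: real_sqrt_divide)
  qed
  have "cmod (1/a - 1/b) = cmod (a - b) / (cmod a * cmod b)"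
    using assms by (simp add: field_simps norm_divide norm_minus_commute norm_mult)
  then show ?thesis
    unfolding chordal_def using assms by (simp add: sqrt_inv field_simps)
qed

lemma chordal_le_norm_inverse_diff:
  "a \<noteq> 0 \<Longrightarrow> b \<noteq> 0 \<Longrightarrow> chordal a b \<le> 2 * cmod (1/a - 1/b)"
  by (metis chordal_inverse chordal_le_norm_diff)

lemma norm_quotient_diff_le:
  fixes N E E0 :: complex and c e1 e2 M :: real
  assumes c: "c > 0" and E: "cmod (E - E0) \<le> e1" and E0: "cmod E0 \<le> M"
    and N: "cmod (N - of_real c) \<le> e2" and N_big: "cmod N \<ge> c / 2"
  shows "cmod (E / N - E0 / of_real c) \<le> (c * e1 + e2 * M) / (c / 2 * c)"
proof -
  have nonneg: "e1 \<ge> 0" "e2 \<ge> 0" "M \<ge> 0"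
    using E E0 N norm_ge_zero[of "E - E0"] norm_ge_zero[of E0] norm_ge_zero[of "N - of_real c"]
    by linarith+
  have "N \<noteq> 0" using N_big c by auto
  then have "cmod (E / N - E0 / of_real c)
      = cmod (of_real c * (E - E0) + (of_real c - N) * E0) / (cmod N * c)"
    using c by (simp add: field_simps norm_divide norm_mult)
  also have "\<dots> \<le> (c * e1 + e2 * M) / (c / 2 * c)"
  proof (rule frac_le)
    have "cmod (of_real c * (E - E0) + (of_real c - N) * E0)
        \<le> c * cmod (E - E0) + cmod (of_real c - N) * cmod E0"
      using c by (metis abs_of_pos norm_mult norm_of_real norm_triangle_ineq)
    also have "\<dots> \<le> c * e1 + e2 * M"
      using c E E0 N nonneg
      by (intro add_mono mult_mono mult_left_mono) (auto simp: norm_minus_commute)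
    finally show "cmod (of_real c * (E - E0) + (of_real c - N) * E0) \<le> c * e1 + e2 * M" .
    show "0 \<le> c * e1 + e2 * M" using c nonneg by simp
    show "0 < c / 2 * c" using c by simp
    show "c / 2 * c \<le> cmod N * c" using N_big c by simp
  qed
  finally show ?thesis .
qed

lemma chordal_perturbation_le:
  fixes E E0 \<rho> W :: complex and c e1 M e4 e2 :: real
  assumes c: "c > 0" and E_close: "cmod (E - E0) \<le> e1" and E0_bounded: "cmod E0 \<le> M"
    and \<rho>_close: "cmod (\<rho> - 1) \<le> e4"
    and e2: "e2 = c * e4 + cmod W * (M + e1)" and e2_small: "e2 < c / 2"
    and E: "E \<noteq> 0" and E0: "E0 \<noteq> 0"
  shows "chordal (of_real c * \<rho> / E + W) (of_real c / E0) \<le> 2 * ((c * e1 + e2 * M) / (c * c / 2))"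
proof -
  define N where "N = of_real c * \<rho> + W * E"
  have "cmod E \<le> cmod E0 + cmod (E - E0)" by (metis add.commute diff_add_cancel norm_triangle_ineq)
  then have E_bounded: "cmod E \<le> M + e1" using E_close E0_bounded by simp
  have "N - of_real c = of_real c * (\<rho> - 1) + W * E" by (simp add: N_def algebra_simps)
  then have "cmod (N - of_real c) \<le> c * cmod (\<rho> - 1) + cmod W * cmod E"
    using c by (metis abs_of_pos norm_mult norm_of_real norm_triangle_ineq)
  also have "\<dots> \<le> c * e4 + cmod W * (M + e1)"
    using c \<rho>_close E_bounded by (intro add_mono mult_left_mono) auto
  finally have N_close: "cmod (N - of_real c) \<le> e2" using e2 by simp
  have "c \<le> cmod N + cmod (N - of_real c)"
    using norm_triangle_ineq4[of N "N - of_real c"] c by simp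
  then have N_big: "cmod N \<ge> c / 2" using N_close e2_small by simp
  then have "N \<noteq> 0" using c by auto
  have "of_real c * \<rho> / E + W = N / E" using E by (simp add: N_def field_simps)
  then have "chordal (of_real c * \<rho> / E + W) (of_real c / E0) \<le> 2 * cmod (E / N - E0 / of_real c)"
    using chordal_le_norm_inverse_diff[of "N / E" "of_real c / E0"] \<open>N \<noteq> 0\<close> E E0 c by simp
  also have "\<dots> \<le> 2 * ((c * e1 + e2 * M) / (c / 2 * c))"
    using norm_quotient_diff_le[OF c E_close E0_bounded N_close N_big] by linarith
  finally show ?thesis by (simp add: mult.commute)
qed

lemma chordal_inverse_perturbation_le:
  fixes v \<rho> D :: complex and k q dn Rn e4 e3 :: real
  assumes dn: "dn > 0" and hv: "cmod v \<le> Rn" and h4: "cmod (\<rho> - 1) \<le> e4"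
    and h3: "cmod (D - 1) \<le> e3" and e3: "e3 \<le> 1/2"
    and A: "v * \<rho> / (of_real dn * D) + of_real q \<noteq> 0"
    and B: "of_real k + v / of_real dn \<noteq> 0"
  shows "chordal (1 / (v * \<rho> / (of_real dn * D) + of_real q)) (1 / (of_real k + v / of_real dn))
      \<le> 2 * (\<bar>q - k\<bar> + Rn / dn * (2 * (e4 + e3)))"
proof -
  have "1 \<le> cmod D + cmod (D - 1)"
    using norm_triangle_ineq4[of D "D - 1"] by simp
  then have nD: "cmod D \<ge> 1/2" using h3 e3 by simp
  then have D0: "D \<noteq> 0" by auto
  have "cmod (\<rho> - D) \<le> cmod (\<rho> - 1) + cmod (D - 1)"
    using norm_triangle_ineq4[of "\<rho> - 1" "D - 1"] by simp
  then have n\<rho>D: "cmod (\<rho> - D) \<le> e4 + e3" using h4 h3 by simp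
  have "(v * \<rho> / (of_real dn * D) + of_real q) - (of_real k + v / of_real dn)
      = v * (\<rho> - D) / (of_real dn * D) + of_real (q - k)"
    using D0 dn by (simp add: field_simps)
  then have "cmod ((v * \<rho> / (of_real dn * D) + of_real q) - (of_real k + v / of_real dn))
      \<le> cmod (v * (\<rho> - D) / (of_real dn * D)) + cmod (of_real (q - k) :: complex)"
    by (simp only: norm_triangle_ineq)
  also have "\<dots> = cmod v * cmod (\<rho> - D) / (dn * cmod D) + \<bar>q - k\<bar>"
    using dn by (simp add: norm_divide norm_mult del: of_real_diff)
  also have "cmod v * cmod (\<rho> - D) / (dn * cmod D) \<le> Rn * (e4 + e3) / (dn * (1/2))"
  proof -
    have "Rn \<ge> 0" "e4 + e3 \<ge> 0" using hv n\<rho>D norm_ge_zero order_trans by blast+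
    then show ?thesis using dn nD hv n\<rho>D by (intro frac_le mult_mono) auto
  qed
  also have "Rn * (e4 + e3) / (dn * (1/2)) = Rn / dn * (2 * (e4 + e3))" by simp
  finally have "cmod ((v * \<rho> / (of_real dn * D) + of_real q) - (of_real k + v / of_real dn))
      \<le> \<bar>q - k\<bar> + Rn / dn * (2 * (e4 + e3))" by simp
  then show ?thesis
    using chordal_le_norm_diff[of "v * \<rho> / (of_real dn * D) + of_real q" "of_real k + v / of_real dn"]
    unfolding chordal_inverse[OF A B] by simp
qed

lemma loc_unif_conv_sphereI:
  assumes "\<And>r. r > 0 \<Longrightarrow> \<exists>g. (g \<longlongrightarrow> 0) (at_right 0) \<and>
             (\<forall>\<^sub>F s in at_right 0. \<forall>z. r \<le> cmod z \<longrightarrow> Freg s z \<longrightarrow> Greg z \<longrightarrow>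
                 chordal (F s z) (G z) \<le> g s)"
  shows "loc_unif_conv_sphere F Freg G Greg"
  unfolding loc_unif_conv_sphere_def
proof (intro allI impI)
  fix r \<epsilon> :: real assume "r > 0" "\<epsilon> > 0"
  then obtain g where g: "(g \<longlongrightarrow> 0) (at_right 0)"
    and bound: "\<forall>\<^sub>F s in at_right 0. \<forall>z. r \<le> cmod z \<longrightarrow> Freg s z \<longrightarrow> Greg z \<longrightarrow>
                   chordal (F s z) (G z) \<le> g s"
    using assms by blast
  have "\<forall>\<^sub>F s in at_right 0. g s < \<epsilon>" using order_tendstoD(2)[OF g \<open>\<epsilon> > 0\<close>] .
  with bound show "\<forall>\<^sub>F s in at_right 0. \<forall>z. r \<le> cmod z \<longrightarrow> Freg s z \<longrightarrow> Greg z \<longrightarrow>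
                     chordal (F s z) (G z) < \<epsilon>"
    by eventually_elim force
qed

section \<open>Alternating products close to 1\<close>

lemma powi_sign_near_1:
  fixes t :: complex
  assumes "cmod t \<le> \<eta>" "\<eta> \<le> 1/2"
  shows "cmod ((1 - t) powi ((-1::int)^k) - 1) \<le> 2 * \<eta>"
proof (cases "even k")
  case True
  have "cmod t \<le> 2 * \<eta>" using assms norm_ge_zero[of t] by linarith
  then show ?thesis using True by (simp add: norm_minus_commute)
next
  case False
  have half: "cmod (1 - t) \<ge> 1/2"
    using assms norm_triangle_ineq2[of 1 t] by simp
  then have "1 - t \<noteq> 0" by auto
  then have "(1 - t) powi ((-1::int)^k) - 1 = t / (1 - t)"
    using False by (simp add: power_int_minus field_simps)
  then have "cmod ((1 - t) powi ((-1::int)^k) - 1) = cmod t / cmod (1 - t)"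
    by (simp add: norm_divide)
  also have "\<dots> \<le> cmod t / (1/2)"
    using half by (intro divide_left_mono) auto
  also have "\<dots> \<le> 2 * \<eta>" using assms by simp
  finally show ?thesis .
qed

lemma norm_prod_powi_sign_minus_1_le:
  fixes t :: "nat \<Rightarrow> complex"
  assumes "\<forall>i\<in>A. cmod (t i) \<le> \<eta>" "\<eta> \<le> 1/2"
  shows "cmod ((\<Prod>i\<in>A. (1 - t i) powi ((-1::int)^(i-1))) - 1) \<le> (1 + 2*\<eta>)^card A - 1"
proof -
  define f where "f i = (1 - t i) powi ((-1::int)^(i-1)) - 1" for i
  have "cmod ((\<Prod>i\<in>A. 1 + f i) - 1) \<le> (\<Prod>i\<in>A. 1 + cmod (f i)) - 1"
    by (rule norm_prod_minus1_le_prod_minus1)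
  also have "(\<Prod>i\<in>A. 1 + cmod (f i)) \<le> (\<Prod>i\<in>A. 1 + 2*\<eta>)"
    using assms powi_sign_near_1 unfolding f_def by (intro prod_mono) auto
  finally show ?thesis by (simp add: f_def)
qed

lemma uniformly_tendsto_prod_powi_sign:
  fixes f :: "nat \<Rightarrow> 'b \<Rightarrow> real"
  assumes A: "finite A" and D: "\<And>i. i \<in> A \<Longrightarrow> D i > 0"
    and f: "\<And>i. i \<in> A \<Longrightarrow> (f i \<longlongrightarrow> 0) F"
  shows "\<exists>e. (e \<longlongrightarrow> 0) F \<and> (\<forall>\<^sub>F x in F. \<forall>u::complex. cmod u \<le> R \<longrightarrow>
           cmod ((\<Prod>i\<in>A. (1 - (u * of_real (f i x)) ^ D i) powi ((-1::int)^(i-1))) - 1) \<le> e x)"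
proof -
  define \<eta> where "\<eta> x = (\<Sum>i\<in>A. (R * \<bar>f i x\<bar>) ^ D i)" for x
  have "(\<eta> \<longlongrightarrow> (\<Sum>i\<in>A. (R * \<bar>0\<bar>) ^ D i)) F"
    unfolding \<eta>_def by (intro tendsto_intros f)
  moreover have "(\<Sum>i\<in>A. (R * \<bar>0::real\<bar>) ^ D i) = 0"
    using D by (intro sum.neutral) auto
  ultimately have \<eta>: "(\<eta> \<longlongrightarrow> 0) F" by simp
  have "((\<lambda>x. (1 + 2 * \<eta> x) ^ card A - 1) \<longlongrightarrow> (1 + 2 * 0) ^ card A - 1) F"
    by (intro tendsto_intros \<eta>)
  then have e: "((\<lambda>x. (1 + 2 * \<eta> x) ^ card A - 1) \<longlongrightarrow> 0) F" by simp
  have "\<forall>\<^sub>F x in F. \<eta> x < 1/2" by (rule order_tendstoD(2)[OF \<eta>]) simp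
  then have "\<forall>\<^sub>F x in F. \<forall>u::complex. cmod u \<le> R \<longrightarrow>
      cmod ((\<Prod>i\<in>A. (1 - (u * of_real (f i x)) ^ D i) powi ((-1::int)^(i-1))) - 1)
        \<le> (1 + 2 * \<eta> x) ^ card A - 1"
  proof (eventually_elim, intro allI impI)
    fix x and u :: complex assume small: "\<eta> x < 1/2" and u: "cmod u \<le> R"
    have "cmod ((u * of_real (f i x)) ^ D i) \<le> \<eta> x" if i: "i \<in> A" for i
    proof -
      have "cmod ((u * of_real (f i x)) ^ D i) = (cmod u * \<bar>f i x\<bar>) ^ D i"
        by (simp add: norm_power norm_mult)
      also have "\<dots> \<le> (R * \<bar>f i x\<bar>) ^ D i"
        using u by (intro power_mono mult_right_mono) auto
      also have "\<dots> \<le> \<eta> x"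
      proof -
        have "R \<ge> 0" using u norm_ge_zero[of u] by linarith
        then show ?thesis unfolding \<eta>_def using A i by (intro member_le_sum) auto
      qed
      finally show ?thesis .
    qed
    then show "cmod ((\<Prod>i\<in>A. (1 - (u * of_real (f i x)) ^ D i) powi ((-1::int)^(i-1))) - 1)
        \<le> (1 + 2 * \<eta> x) ^ card A - 1"
      using small by (intro norm_prod_powi_sign_minus_1_le) auto
  qed
  then show ?thesis using e by (intro exI conjI)
qed

lemma prod_power_int_eq_power_int_sum:
  assumes "(z::'a::field) \<noteq> 0"
  shows "(\<Prod>i\<in>A. z powi f i) = z powi (\<Sum>i\<in>A. f i)"
proof (induction A rule: infinite_finite_induct)
  case (insert x F) then show ?case using assms by (simp add: power_int_add)
qed auto

lemma uminus_powi_sign: "(- (x::complex)) powi ((-1::int)^k) = - (x powi ((-1)^k))"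
proof -
  have "(-1::complex) powi ((-1::int)^k) = -1"
    by (cases "even k") (auto simp: power_int_minus)
  then show ?thesis by (metis mult_minus1 power_int_mult_distrib)
qed

lemma prod_powi_pow_diff_factor_left:
  fixes z :: complex
  assumes "z \<noteq> 0"
  shows "(\<Prod>i\<in>I. (z^D i - c i^D i) powi e i) =
     (\<Prod>i\<in>I. (z^D i) powi e i) * (\<Prod>i\<in>I. (1 - (c i/z)^D i) powi e i)"
proof -
  have "z^D i - c i^D i = z^D i * (1 - (c i/z)^D i)" for i
    using assms by (simp add: field_simps)
  then show ?thesis by (simp add: power_int_mult_distrib prod.distrib)
qed

lemma prod_powi_pow_diff_factor_right:
  fixes w :: complex
  assumes "\<forall>i\<in>I. c i \<noteq> 0"
  shows "(\<Prod>i\<in>I. (w^D i - c i^D i) powi e i) =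
     (\<Prod>i\<in>I. (- (c i^D i)) powi e i) * (\<Prod>i\<in>I. (1 - (w / c i)^D i) powi e i)"
proof -
  have "(\<Prod>i\<in>I. (w^D i - c i^D i) powi e i)
      = (\<Prod>i\<in>I. (- (c i^D i) * (1 - (w / c i)^D i)) powi e i)"
  proof (rule prod.cong[OF refl])
    fix i assume "i \<in> I"
    then have "w^D i - c i^D i = - (c i^D i) * (1 - (w / c i)^D i)"
      using assms by (simp add: field_simps)
    then show "(w^D i - c i^D i) powi e i = (- (c i^D i) * (1 - (w / c i)^D i)) powi e i"
      by simp
  qed
  then show ?thesis by (simp only: power_int_mult_distrib prod.distrib)
qed

lemma trinomial_eq_pow_mult:
  fixes z :: complex
  assumes z: "z \<noteq> 0" and k: "k \<ge> 1"
  shows "a * z ^ k + b * z + e = z ^ k * (a + b * (1/z)^(k - 1) + e * (1/z)^k)"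
proof -
  have "z ^ k = z * z ^ (k - 1)" using k by (metis Suc_diff_le diff_Suc_1 power_Suc)
  then have "z ^ k * (1/z)^(k - 1) = z" using z by (simp add: power_one_over)
  moreover have "z ^ k * (1/z)^k = 1" using z by (simp add: power_one_over)
  ultimately show ?thesis by (simp add: algebra_simps)
qed

lemma hmap_denominator_eq:
  fixes z :: complex assumes "z \<noteq> 0"
  shows "(of_nat k - 1) * z ^ k + 1 = z ^ k * ((of_nat k - 1) + (1/z)^k)"
  using assms by (simp add: algebra_simps power_one_over)

lemma hmap_eq_at_inverse:
  fixes z :: complex assumes "z \<noteq> 0"
  shows "hmap k z = of_nat k / ((of_nat k - 1) + (1/z)^k)"
  unfolding hmap_def hmap_denominator_eq[OF assms] using assms by simp

lemma h_regular_imp_nonzero: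
  fixes z :: complex assumes "z \<noteq> 0" and "h_regular k z"
  shows "(of_nat k - 1) + (1/z)^k \<noteq> 0"
  using assms unfolding h_regular_def hmap_denominator_eq[OF assms(1)] by simp

lemma norm_of_real_minus_1: "cmod (complex_of_real a - 1) = \<bar>a - 1\<bar>"
  by (metis norm_of_real of_real_1 of_real_diff)

lemma norm_trinomial_at_inverse_diff_le:
  fixes u :: complex and c X Y Z R :: real
  assumes u: "cmod u \<le> R" and c: "c \<ge> 1"
  shows "cmod (((of_real c - 1) * of_real X + of_real Y * u^(k-1) + of_real Z * u^k)
                 - ((of_real c - 1) + u^k))
     \<le> (c - 1) * \<bar>X - 1\<bar> + \<bar>Y\<bar> * R^(k-1) + \<bar>Z - 1\<bar> * R^k"
proof -
  have "((of_real c - 1) * of_real X + of_real Y * u^(k-1) + of_real Z * u^k) - ((of_real c - 1) + u^k)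
     = of_real ((c - 1) * (X - 1)) + of_real Y * u^(k-1) + of_real (Z - 1) * u^k"
    by (simp add: algebra_simps)
  also have "cmod \<dots> \<le> cmod (of_real ((c - 1) * (X - 1)) :: complex)
                        + cmod (of_real Y * u^(k-1)) + cmod (of_real (Z - 1) * u^k)"
    by (meson add_mono norm_triangle_ineq order_trans order_refl)
  also have "\<dots> = (c - 1) * \<bar>X - 1\<bar> + \<bar>Y\<bar> * cmod (u^(k-1)) + \<bar>Z - 1\<bar> * cmod (u^k)"
    using c by (simp add: norm_mult abs_mult norm_of_real_minus_1)
  also have "\<dots> \<le> (c - 1) * \<bar>X - 1\<bar> + \<bar>Y\<bar> * R^(k-1) + \<bar>Z - 1\<bar> * R^k"
    using u c by (intro add_mono mult_left_mono) (auto simp: norm_power power_mono)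
  finally show ?thesis .
qed

lemma norm_hmap_denominator_at_inverse_le:
  fixes u :: complex and c R :: real
  assumes "cmod u \<le> R" and "c \<ge> 1"
  shows "cmod ((of_real c - 1) + u^k) \<le> (c - 1) + R^k"
proof -
  have "cmod ((of_real c - 1) + u^k) \<le> cmod (of_real (c - 1) :: complex) + cmod (u^k)"
    by (metis norm_triangle_ineq of_real_1 of_real_diff)
  also have "\<dots> \<le> (c - 1) + R^k"
    using assms by (simp add: norm_power power_mono norm_of_real_minus_1)
  finally show ?thesis .
qed

lemma norm_trinomial_minus_1_le:
  fixes w :: complex and c X Y Z q :: real
  assumes w: "cmod w \<le> q" and c: "c \<ge> 1"
  shows "cmod ((of_real c - 1) * of_real X * w ^ k + of_real Y * w + of_real Z - 1)
     \<le> (c - 1) * \<bar>X\<bar> * q ^ k + \<bar>Y\<bar> * q + \<bar>Z - 1\<bar>"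
proof -
  have "(of_real c - 1) * of_real X * w ^ k + of_real Y * w + of_real Z - 1
     = of_real ((c - 1) * X) * w ^ k + of_real Y * w + of_real (Z - 1)"
    by (simp add: algebra_simps)
  also have "cmod \<dots> \<le> cmod (of_real ((c - 1) * X) * w ^ k) + cmod (of_real Y * w)
                        + cmod (of_real (Z - 1) :: complex)"
    by (meson add_mono norm_triangle_ineq order_trans order_refl)
  also have "\<dots> = (c - 1) * \<bar>X\<bar> * cmod (w ^ k) + \<bar>Y\<bar> * cmod w + \<bar>Z - 1\<bar>"
    using c by (simp add: norm_mult abs_mult norm_of_real_minus_1)
  also have "\<dots> \<le> (c - 1) * \<bar>X\<bar> * q ^ k + \<bar>Y\<bar> * q + \<bar>Z - 1\<bar>"
    using w c by (intro add_mono mult_left_mono) (auto simp: norm_power power_mono)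
  finally show ?thesis .
qed

lemma tendsto_of_tendsto_scaled_diff:
  fixes F \<sigma> :: "real \<Rightarrow> real"
  assumes "((\<lambda>s. (F s - a) / \<sigma> s) \<longlongrightarrow> L) (at_right 0)" "(\<sigma> \<longlongrightarrow> 0) (at_right 0)"
    and "\<forall>\<^sub>F s in at_right 0. \<sigma> s \<noteq> 0"
  shows "(F \<longlongrightarrow> a) (at_right 0)"
proof -
  have "((\<lambda>s. (F s - a) / \<sigma> s * \<sigma> s + a) \<longlongrightarrow> L * 0 + a) (at_right 0)"
    by (intro tendsto_intros assms)
  moreover have "\<forall>\<^sub>F s in at_right 0. (F s - a) / \<sigma> s * \<sigma> s + a = F s"
    using assms(3) by eventually_elim simp
  ultimately show ?thesis using tendsto_cong by fastforce
qed

lemma powr_tendsto_0_at_right: "a > 0 \<Longrightarrow> ((\<lambda>s::real. s powr a) \<longlongrightarrow> 0) (at_right 0)"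
  by (rule tendsto_zero_powrI[of "\<lambda>s. s" _ "\<lambda>_. a" a])
     (auto intro: eventually_mono[OF eventually_at_right_less])

section \<open>The exponents of the coefficients \<open>b\<^sub>i\<close>\<close>

definition beta :: "(nat \<Rightarrow> nat) \<Rightarrow> nat \<Rightarrow> real" where
  "beta d m = (\<Sum>j=1..m. 1 / real (d j))"

lemma beta_Suc: "beta d (Suc m) = beta d m + 1 / real (d (Suc m))"
  by (simp add: beta_def)

lemma sum_alternating_DD:
  "(\<Sum>i=1..m. (-1::int)^(i-1) * int (DD d i)) = int (d 1) - (-1)^m * int (d (Suc m))"
proof (induction m)
  case (Suc m)
  have "(\<Sum>i=1..Suc m. (-1::int)^(i-1) * int (DD d i)) =
        (\<Sum>i=1..m. (-1::int)^(i-1) * int (DD d i)) + (-1)^m * int (DD d (Suc m))"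
    by simp
  also have "\<dots> = int (d 1) - (-1)^(Suc m) * int (d (Suc (Suc m)))"
    using Suc by (simp add: DD_def algebra_simps)
  finally show ?case .
qed simp

lemma sum_alternating_DD_beta:
  assumes "\<And>i. 1 \<le> i \<Longrightarrow> i \<le> m \<Longrightarrow> d i > 0"
  shows "(\<Sum>i=1..m. (-1)^(i-1) * real (DD d i) * beta d i)
     = (1 - (-1)^m) / 2 - (-1)^m * real (d (Suc m)) * beta d m"
  using assms
proof (induction m)
  case (Suc m)
  have pos: "real (d (Suc m)) > 0" using Suc.prems by auto
  have "(\<Sum>i=1..Suc m. (-1)^(i-1) * real (DD d i) * beta d i)
      = (\<Sum>i=1..m. (-1)^(i-1) * real (DD d i) * beta d i)
          + (-1)^m * real (DD d (Suc m)) * beta d (Suc m)"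
    by simp
  also have "\<dots> = (1 - (-1)^m) / 2 - (-1)^m * real (d (Suc m)) * beta d m
                     + (-1)^m * real (DD d (Suc m)) * beta d (Suc m)"
    using Suc by simp
  also have "\<dots> = (1 - (-1)^Suc m) / 2 - (-1)^(Suc m) * real (d (Suc (Suc m))) * beta d (Suc m)"
    using pos by (simp add: DD_def beta_Suc field_simps)
  finally show ?case .
qed (simp add: beta_def)

lemma bcoef_pos_ln:
  assumes s: "s > 0" and dm: "dmax n d > 0" and t: "tau n d > 0" and i: "1 \<le> i"
  shows "bcoef n d s i > 0 \<and>
     ln (bcoef n d s i) = 2 * ln (dmax n d) / real (d 1) + beta d i * ln (tau n d * s)"
  using i
proof (induction i)
  case (Suc i)
  show ?case
  proof (cases "i = 0")
    case True
    have "ln ((dmax n d)\<^sup>2 * tau n d * s) = 2 * ln (dmax n d) + ln (tau n d * s)"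
      using s dm t by (simp add: ln_mult ln_realpow)
    then show ?thesis using True s dm t by (simp add: beta_def field_simps add_divide_distrib)
  next
    case False
    with Suc have "bcoef n d s i > 0"
      and "ln (bcoef n d s i) = 2 * ln (dmax n d) / real (d 1) + beta d i * ln (tau n d * s)"
      by auto
    with False s t show ?thesis by (simp add: ln_mult beta_Suc field_simps)
  qed
qed simp

lemma bcoef_eq_const_mult_powr:
  assumes s: "s > 0" and dm: "dmax n d > 0" and t: "tau n d > 0" and i: "1 \<le> i"
  shows "bcoef n d s i =
           exp (2 * ln (dmax n d) / real (d 1) + beta d i * ln (tau n d)) * s powr beta d i"
proof -
  from bcoef_pos_ln[OF assms] have b: "bcoef n d s i > 0"
    and l: "ln (bcoef n d s i) = 2 * ln (dmax n d) / real (d 1) + beta d i * ln (tau n d * s)"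
    by auto
  have "bcoef n d s i = exp (ln (bcoef n d s i))" using b by simp
  also have "\<dots> = exp (2 * ln (dmax n d) / real (d 1) + beta d i * ln (tau n d)) * exp (beta d i * ln s)"
    using s t by (simp add: l ln_mult algebra_simps exp_add)
  also have "exp (beta d i * ln s) = s powr beta d i" using s by (simp add: powr_def mult.commute)
  finally show ?thesis .
qed

locale degree_data =
  fixes n :: nat and d :: "nat \<Rightarrow> nat"
  assumes odd_n: "odd n" and n_ge_3: "n \<ge> 3"
    and d_positive: "\<forall>i\<in>{1..n}. d i > 0"
    and sum_inverse_d_less_1: "(\<Sum>i=1..n. 1 / real (d i)) < 1"
begin

lemma d_pos: "1 \<le> i \<Longrightarrow> i \<le> n \<Longrightarrow> d i > 0"
  using d_positive by auto

lemma DD_pos: "i \<in> {1..n-1} \<Longrightarrow> DD d i > 0"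
  using d_pos[of i] by (auto simp: DD_def)

lemma beta_mono: "i \<le> j \<Longrightarrow> beta d i \<le> beta d j"
  unfolding beta_def by (rule sum_mono2) auto

lemma beta_pos: "1 \<le> i \<Longrightarrow> beta d i > 0"
proof -
  assume "1 \<le> i"
  moreover have "beta d 1 > 0" using d_pos[of 1] n_ge_3 by (simp add: beta_def)
  ultimately show ?thesis using beta_mono[of 1 i] by simp
qed

lemma d1_gt_1: "real (d 1) > 1"
proof -
  have "beta d 1 < 1"
    using beta_mono[of 1 n] sum_inverse_d_less_1 n_ge_3 by (simp add: beta_def)
  then show ?thesis using d_pos[of 1] n_ge_3 by (simp add: beta_def divide_less_eq)
qed

lemma dn_gt_1: "real (d n) > 1"
proof -
  have "beta d (n-1) + 1 / real (d n) < 1"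
    using beta_Suc[of d "n-1"] n_ge_3 sum_inverse_d_less_1 by (simp add: beta_def)
  moreover have "beta d (n-1) > 0" using beta_pos n_ge_3 by simp
  ultimately have "1 / real (d n) < 1" by simp
  then show ?thesis using d_pos[of n] n_ge_3 by (simp add: divide_less_eq)
qed

lemma dmax_pos: "dmax n d > 0"
proof -
  have "d 1 \<le> Max (d ` {1..n})" using n_ge_3 by (intro Max_ge) auto
  then show ?thesis using d_pos[of 1] n_ge_3 unfolding dmax_def by linarith
qed

lemma nu_eq: "nu n d = real (d n) / (real (d n) - 1) * beta d (n-1)"
  by (simp add: nu_def beta_def)

lemma beta_less_nu: "1 \<le> i \<Longrightarrow> i \<le> n - 1 \<Longrightarrow> beta d i < nu n d"
proof -
  assume i: "1 \<le> i" "i \<le> n - 1"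
  have "beta d (n-1) < real (d n) / (real (d n) - 1) * beta d (n-1)"
    using beta_pos[of "n-1"] n_ge_3 dn_gt_1 by (simp add: field_simps)
  then show ?thesis using beta_mono[OF i(2)] nu_eq by simp
qed

lemma nu_pos: "nu n d > 0"
proof -
  have "1 \<le> n - 1" using n_ge_3 by simp
  then show ?thesis using beta_less_nu[of 1] beta_pos[of 1] by simp
qed

lemma tau_pos: "tau n d > 0"
  using dmax_pos d1_gt_1 dn_gt_1 by (simp add: tau_def)

lemma ln_tau:
  "real (d n) * beta d (n-1) * ln (tau n d)
     = ln (real (d 1)) + ln (real (d n)) + 2 * (real (d 1) - real (d n)) / real (d 1) * ln (dmax n d)"
proof -
  define base where
    "base = real (d 1) * real (d n) * dmax n d powr (2 * (real (d 1) - real (d n)) / real (d 1))"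
  have "beta d (n-1) > 0" using beta_pos n_ge_3 by simp
  have "tau n d = base powr (1 / (real (d n) * beta d (n-1)))"
    by (simp add: tau_def base_def beta_def sum_distrib_left)
  then have "ln (tau n d) = (1 / (real (d n) * beta d (n-1))) * ln base"
    by simp
  with \<open>beta d (n-1) > 0\<close> dn_gt_1
  have "real (d n) * beta d (n-1) * ln (tau n d) = ln base"
    by (simp add: field_simps)
  also have "\<dots> = ln (real (d 1)) + ln (real (d n))
                    + 2 * (real (d 1) - real (d n)) / real (d 1) * ln (dmax n d)"
    using dmax_pos d1_gt_1 dn_gt_1 by (simp add: base_def ln_mult)
  finally show ?thesis .
qed

lemma sum_alternating_DD_n:
  "(\<Sum>i=1..n-1. (-1::int)^(i-1) * int (DD d i)) = int (d 1) - int (d n)"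
  using sum_alternating_DD[where m="n-1" and d=d] odd_n n_ge_3 by simp

lemma sum_alternating_DD_beta_n:
  "(\<Sum>i=1..n-1. (-1)^(i-1) * real (DD d i) * beta d i) = - real (d n) * beta d (n-1)"
  using sum_alternating_DD_beta[where m="n-1" and d=d] d_pos odd_n n_ge_3 by simp

text \<open>This identity is what the choice of \<open>\<tau>\<close> is made for.\<close>

lemma prod_bcoef_powi_mult_power:
  assumes s: "s > 0"
  shows "(\<Prod>i=1..n-1. (bcoef n d s i ^ DD d i) powi ((-1)^(i-1))) * (s powr nu n d) ^ d n
     = s powr nu n d / (real (d 1) * real (d n))"
proof -
  define c where "c = 2 * ln (dmax n d) / real (d 1)"
  define L where "L = ln (tau n d * s)"
  define e where "e i = (-1)^(i-1) * real (DD d i)" for i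
  have "(\<Prod>i=1..n-1. (bcoef n d s i ^ DD d i) powi ((-1)^(i-1)))
      = (\<Prod>i=1..n-1. exp (e i * (c + beta d i * L)))"
  proof (rule prod.cong[OF refl])
    fix i assume "i \<in> {1..n-1}"
    then have "bcoef n d s i = exp (c + beta d i * L)"
      using bcoef_pos_ln[OF s dmax_pos tau_pos] by (metis atLeastAtMost_iff c_def L_def exp_ln)
    then show "(bcoef n d s i ^ DD d i) powi ((-1)^(i-1)) = exp (e i * (c + beta d i * L))"
      by (simp add: e_def power_int_power exp_power_int mult_ac)
  qed
  also have "\<dots> = exp (\<Sum>i=1..n-1. e i * (c + beta d i * L))"
    by (simp add: exp_sum)
  also have "(\<Sum>i=1..n-1. e i * (c + beta d i * L))
      = c * (\<Sum>i=1..n-1. e i) + L * (\<Sum>i=1..n-1. e i * beta d i)"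
    by (simp add: sum.distrib sum_distrib_left algebra_simps)
  also have "(\<Sum>i=1..n-1. e i) = real (d 1) - real (d n)"
    using arg_cong[OF sum_alternating_DD_n, of real_of_int] by (simp add: e_def)
  also have "(\<Sum>i=1..n-1. e i * beta d i) = - real (d n) * beta d (n-1)"
    using sum_alternating_DD_beta_n by (simp add: e_def)
  finally have prod_eq: "(\<Prod>i=1..n-1. (bcoef n d s i ^ DD d i) powi ((-1)^(i-1)))
      = exp (c * (real (d 1) - real (d n)) + L * (- real (d n) * beta d (n-1)))" .
  have "real (d n) * nu n d = real (d n) * beta d (n-1) + nu n d"
    using dn_gt_1 by (simp add: nu_eq field_simps)
  moreover have "L = ln (tau n d) + ln s" using s tau_pos by (simp add: L_def ln_mult)
  ultimately have exponent: "c * (real (d 1) - real (d n)) + L * (- real (d n) * beta d (n-1))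
        + real (d n) * nu n d * ln s
      = nu n d * ln s - ln (real (d 1) * real (d n))"
    using ln_tau d1_gt_1 dn_gt_1 by (simp add: c_def ln_mult field_simps)
  have "(s powr nu n d) ^ d n = exp (real (d n) * nu n d * ln s)"
    using s by (simp add: powr_def exp_of_nat_mult[symmetric] mult_ac)
  then have "(\<Prod>i=1..n-1. (bcoef n d s i ^ DD d i) powi ((-1)^(i-1))) * (s powr nu n d) ^ d n
      = exp (nu n d * ln s - ln (real (d 1) * real (d n)))"
    unfolding prod_eq exponent[symmetric] by (simp add: exp_add)
  also have "\<dots> = s powr nu n d / (real (d 1) * real (d n))"
    using s d1_gt_1 dn_gt_1 by (simp add: exp_diff powr_def)
  finally show ?thesis .
qed

lemma sigma_tendsto_0: "((\<lambda>s. s powr nu n d) \<longlongrightarrow> 0) (at_right 0)"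
  using powr_tendsto_0_at_right[OF nu_pos] .

lemma bcoef_tendsto_0:
  assumes i: "1 \<le> i"
  shows "((\<lambda>s. bcoef n d s i) \<longlongrightarrow> 0) (at_right 0)"
proof -
  define C where "C = exp (2 * ln (dmax n d) / real (d 1) + beta d i * ln (tau n d))"
  have "\<forall>\<^sub>F s in at_right 0. C * s powr beta d i = bcoef n d s i"
    using eventually_at_right_less[of "0::real"]
    by eventually_elim (simp add: C_def bcoef_eq_const_mult_powr[OF _ dmax_pos tau_pos i])
  moreover have "((\<lambda>s. C * s powr beta d i) \<longlongrightarrow> C * 0) (at_right 0)"
    by (intro tendsto_intros powr_tendsto_0_at_right beta_pos i)
  ultimately show ?thesis using tendsto_cong by fastforce
qed

lemma sigma_div_bcoef_tendsto_0:
  assumes i: "1 \<le> i" "i \<le> n - 1"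
  shows "((\<lambda>s. s powr nu n d / bcoef n d s i) \<longlongrightarrow> 0) (at_right 0)"
proof -
  define C where "C = exp (2 * ln (dmax n d) / real (d 1) + beta d i * ln (tau n d))"
  have "\<forall>\<^sub>F s in at_right 0. s powr (nu n d - beta d i) / C = s powr nu n d / bcoef n d s i"
    using eventually_at_right_less[of "0::real"]
    by eventually_elim (simp add: C_def bcoef_eq_const_mult_powr[OF _ dmax_pos tau_pos i(1)] powr_diff)
  moreover have "((\<lambda>s. s powr (nu n d - beta d i) / C) \<longlongrightarrow> 0 / C) (at_right 0)"
    using beta_less_nu[OF i] by (intro tendsto_intros powr_tendsto_0_at_right) (auto simp: C_def)
  ultimately show ?thesis using tendsto_cong by fastforce
qed

subsection \<open>Convergence of \<open>Q\<^sub>n\<close> and of its conjugate\<close>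

lemma Qn_eq_near_infinity:
  fixes z :: complex
  assumes z: "z \<noteq> 0"
  shows "Qn n d s X Y Z W z =
    of_nat (d 1) * (\<Prod>i=1..n-1. (1 - (of_real (bcoef n d s i) / z)^DD d i) powi ((-1)^(i-1)))
     / ((of_nat (d 1) - 1) * of_real X + of_real Y * (1/z)^(d 1 - 1) + of_real Z * (1/z)^(d 1))
    + of_real W"
proof -
  define \<rho> where "\<rho> = (\<Prod>i=1..n-1. (1 - (of_real (bcoef n d s i) / z)^DD d i) powi ((-1::int)^(i-1)))"
  define E where "E = (of_nat (d 1) - 1) * of_real X + of_real Y * (1/z)^(d 1 - 1) + of_real Z * (1/z)^(d 1)"
  have "(\<Prod>i=1..n-1. (z ^ DD d i) powi ((-1::int)^(i-1)))
      = (\<Prod>i=1..n-1. z powi ((-1)^(i-1) * int (DD d i)))"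
    by (simp add: power_int_power mult.commute)
  also have "\<dots> = z powi (int (d 1) - int (d n))"
    by (simp only: prod_power_int_eq_power_int_sum[OF z] sum_alternating_DD_n)
  finally have "(\<Prod>i=1..n-1. (z ^ DD d i - of_real (bcoef n d s i) ^ DD d i) powi ((-1)^(i-1)))
      = z powi (int (d 1) - int (d n)) * \<rho>"
    unfolding \<rho>_def prod_powi_pow_diff_factor_left[OF z] by simp
  moreover have "(of_nat (d 1) - 1) * of_real X * z ^ d 1 + of_real Y * z + of_real Z = z ^ d 1 * E"
    unfolding E_def using z d1_gt_1 by (intro trinomial_eq_pow_mult) auto
  moreover have "z ^ d n * z powi (int (d 1) - int (d n)) = z ^ d 1"
    using z by (simp flip: power_int_add power_int_of_nat)
  ultimately have "Qn n d s X Y Z W z = of_nat (d 1) * \<rho> / E + of_real W"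
    using z by (simp add: Qn_def field_simps)
  then show ?thesis unfolding \<rho>_def E_def .
qed

lemma Qn_eq_near_zero:
  fixes z :: complex
  assumes s: "s > 0" and z: "z \<noteq> 0"
  defines "\<sigma> \<equiv> s powr nu n d"
  defines "w \<equiv> of_real \<sigma> / z"
  shows "Qn n d s X Y Z W w = of_real \<sigma> *
     ((1/z) ^ d n * (\<Prod>i=1..n-1. (1 - (w / of_real (bcoef n d s i))^DD d i) powi ((-1)^(i-1)))
        / (of_nat (d n) * ((of_nat (d 1) - 1) * of_real X * w ^ d 1 + of_real Y * w + of_real Z))
      + of_real (W / \<sigma>))"
proof -
  define P where "P = (\<Prod>i=1..n-1. (bcoef n d s i ^ DD d i) powi ((-1)^(i-1)))"
  have "\<forall>i\<in>{1..n-1}. complex_of_real (bcoef n d s i) \<noteq> 0"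
    using bcoef_pos_ln[OF s dmax_pos tau_pos] by force
  note factor = prod_powi_pow_diff_factor_right[OF this]
  have "(\<Prod>i=1..n-1. (- (complex_of_real (bcoef n d s i) ^ DD d i)) powi ((-1::int)^(i-1)))
      = (\<Prod>i=1..n-1. - ((complex_of_real (bcoef n d s i) ^ DD d i) powi ((-1::int)^(i-1))))"
    by (simp only: uminus_powi_sign)
  also have "\<dots> = of_real P" \<comment> \<open>there are \<open>n - 1\<close> signs, an even number\<close>
    using odd_n n_ge_3 by (simp add: prod_uminus P_def)
  finally have signs: "(\<Prod>i=1..n-1. (- (complex_of_real (bcoef n d s i) ^ DD d i)) powi ((-1::int)^(i-1)))
      = of_real P" .
  have P_\<sigma>: "P * \<sigma> ^ d n = \<sigma> / (real (d 1) * real (d n))"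
    unfolding P_def \<sigma>_def by (rule prod_bcoef_powi_mult_power[OF s])
  have "w ^ d n * of_real P = (1/z)^d n * of_real (P * \<sigma> ^ d n)"
    by (simp add: w_def field_simps)
  also have "\<dots> = of_real \<sigma> * (1/z)^d n / (of_nat (d 1) * of_nat (d n))"
    unfolding P_\<sigma> by simp
  finally have wP: "w ^ d n * of_real P = of_real \<sigma> * (1/z)^d n / (of_nat (d 1) * of_nat (d n))" .
  define \<rho> where "\<rho> = (\<Prod>i=1..n-1. (1 - (w / of_real (bcoef n d s i))^DD d i) powi ((-1::int)^(i-1)))"
  define D where "D = (of_nat (d 1) - 1) * of_real X * w ^ d 1 + of_real Y * w + of_real Z"
  have "Qn n d s X Y Z W w = of_nat (d 1) * (w ^ d n * of_real P) * \<rho> / D + of_real W"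
    unfolding Qn_def factor signs \<rho>_def D_def by (simp add: mult_ac)
  also have "\<dots> = of_real \<sigma> * ((1/z) ^ d n * \<rho> / (of_nat (d n) * D) + of_real (W / \<sigma>))"
    unfolding wP using s d1_gt_1 by (simp add: \<sigma>_def distrib_left)
  finally show ?thesis unfolding \<rho>_def D_def .
qed

lemma chordal_Qn_hmap_le:
  fixes z :: complex and X Y Z W e4 R :: real
  defines "c \<equiv> real (d 1)"
  defines "M \<equiv> (c - 1) + R ^ d 1"
  defines "e1 \<equiv> (c - 1) * \<bar>X - 1\<bar> + \<bar>Y\<bar> * R ^ (d 1 - 1) + \<bar>Z - 1\<bar> * R ^ d 1"
  defines "e2 \<equiv> c * e4 + \<bar>W\<bar> * (M + e1)"
  assumes z: "z \<noteq> 0" and u: "cmod (1/z) \<le> R"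
    and reg: "Qn_regular n d s X Y Z z" and hreg: "h_regular (d 1) z"
    and \<rho>_close: "cmod ((\<Prod>i=1..n-1. (1 - (1/z * of_real (bcoef n d s i)) ^ DD d i)
                          powi ((-1::int)^(i-1))) - 1) \<le> e4"
    and e2_small: "e2 < c / 2"
  shows "chordal (Qn n d s X Y Z W z) (hmap (d 1) z) \<le> 2 * ((c * e1 + e2 * M) / (c * c / 2))"
proof -
  define u where "u = 1/z"
  define E where "E = (of_real c - 1) * of_real X + of_real Y * u ^ (d 1 - 1) + of_real Z * u ^ d 1"
  define E0 where "E0 = (of_real c - 1) + u ^ d 1"
  define \<rho> where "\<rho> = (\<Prod>i=1..n-1. (1 - (1/z * of_real (bcoef n d s i)) ^ DD d i)
                                 powi ((-1::int)^(i-1)))"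
  have c1: "c > 1" using d1_gt_1 c_def by simp
  have Q: "Qn n d s X Y Z W z = of_real c * \<rho> / E + of_real W"
    using Qn_eq_near_infinity[OF z] by (simp add: \<rho>_def E_def u_def c_def)
  have h: "hmap (d 1) z = of_real c / E0"
    using hmap_eq_at_inverse[OF z] by (simp add: E0_def u_def c_def)
  have E0: "E0 \<noteq> 0"
    using h_regular_imp_nonzero[OF z hreg] by (simp add: E0_def u_def c_def)
  have E: "E \<noteq> 0"
    using reg trinomial_eq_pow_mult[OF z, of "d 1" "(of_nat (d 1) - 1) * of_real X"] c1
    by (auto simp: Qn_regular_def E_def u_def c_def)
  have E_close: "cmod (E - E0) \<le> e1"
    using norm_trinomial_at_inverse_diff_le[OF u[folded u_def], where c=c and k="d 1"] c1
    by (simp add: E_def E0_def e1_def)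
  have E0_bounded: "cmod E0 \<le> M"
    using norm_hmap_denominator_at_inverse_le[OF u[folded u_def], where c=c and k="d 1"] c1
    by (simp add: E0_def M_def)
  have "e2 = c * e4 + cmod (of_real W :: complex) * (M + e1)"
    by (simp add: e2_def)
  from chordal_perturbation_le[OF _ E_close E0_bounded \<rho>_close[folded \<rho>_def] this e2_small E E0] c1
  show ?thesis unfolding Q h by simp
qed

lemma Qn_loc_unif_conv_hmap:
  fixes X Y Z W :: "real \<Rightarrow> real"
  assumes X: "(X \<longlongrightarrow> 1) (at_right 0)" and Y: "(Y \<longlongrightarrow> 0) (at_right 0)"
    and Z: "(Z \<longlongrightarrow> 1) (at_right 0)" and W: "(W \<longlongrightarrow> 0) (at_right 0)"
  shows "loc_unif_conv_sphere (\<lambda>s. Qn n d s (X s) (Y s) (Z s) (W s))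
     (\<lambda>s. Qn_regular n d s (X s) (Y s) (Z s)) (hmap (d 1)) (h_regular (d 1))"
proof (rule loc_unif_conv_sphereI)
  fix r :: real assume r: "r > 0"
  define R where "R = 1/r"
  define c where "c = real (d 1)"
  define M where "M = (c - 1) + R ^ d 1"
  have "\<exists>e4. (e4 \<longlongrightarrow> 0) (at_right 0) \<and> (\<forall>\<^sub>F s in at_right 0. \<forall>u::complex. cmod u \<le> R \<longrightarrow>
        cmod ((\<Prod>i=1..n-1. (1 - (u * of_real (bcoef n d s i)) ^ DD d i) powi ((-1::int)^(i-1))) - 1)
          \<le> e4 s)"
    by (rule uniformly_tendsto_prod_powi_sign[where f="\<lambda>i s. bcoef n d s i"])
       (auto intro: DD_pos bcoef_tendsto_0)
  then obtain e4 where e4: "(e4 \<longlongrightarrow> 0) (at_right 0)"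
    and prod_near_1: "\<forall>\<^sub>F s in at_right 0. \<forall>u::complex. cmod u \<le> R \<longrightarrow>
        cmod ((\<Prod>i=1..n-1. (1 - (u * of_real (bcoef n d s i)) ^ DD d i) powi ((-1::int)^(i-1))) - 1)
          \<le> e4 s"
    by blast
  define e1 where "e1 s = (c - 1) * \<bar>X s - 1\<bar> + \<bar>Y s\<bar> * R ^ (d 1 - 1) + \<bar>Z s - 1\<bar> * R ^ d 1" for s
  define e2 where "e2 s = c * e4 s + \<bar>W s\<bar> * (M + e1 s)" for s
  define g where "g s = 2 * ((c * e1 s + e2 s * M) / (c * c / 2))" for s
  have c1: "c > 1" using d1_gt_1 c_def by simp
  have "(e1 \<longlongrightarrow> (c - 1) * \<bar>1 - 1\<bar> + \<bar>0\<bar> * R ^ (d 1 - 1) + \<bar>1 - 1\<bar> * R ^ d 1) (at_right 0)"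
    unfolding e1_def by (intro tendsto_intros X Y Z)
  then have e1: "(e1 \<longlongrightarrow> 0) (at_right 0)" by simp
  have "(e2 \<longlongrightarrow> c * 0 + \<bar>0\<bar> * (M + 0)) (at_right 0)"
    unfolding e2_def by (intro tendsto_intros e4 e1 W)
  then have e2: "(e2 \<longlongrightarrow> 0) (at_right 0)" by simp
  have "(g \<longlongrightarrow> 2 * ((c * 0 + 0 * M) / (c * c / 2))) (at_right 0)"
    unfolding g_def using c1 by (intro tendsto_mult tendsto_divide tendsto_add tendsto_const e2 e1) simp
  then have g: "(g \<longlongrightarrow> 0) (at_right 0)" by simp
  have "\<forall>\<^sub>F s in at_right 0. e2 s < c / 2"
    by (rule order_tendstoD(2)[OF e2]) (use c1 in simp)
  with prod_near_1
  have "\<forall>\<^sub>F s in at_right 0. \<forall>z. r \<le> cmod z \<longrightarrow> Qn_regular n d s (X s) (Y s) (Z s) z \<longrightarrow>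
      h_regular (d 1) z \<longrightarrow> chordal (Qn n d s (X s) (Y s) (Z s) (W s) z) (hmap (d 1) z) \<le> g s"
  proof (eventually_elim, intro allI impI)
    fix s z
    assume prod_s: "\<forall>u::complex. cmod u \<le> R \<longrightarrow>
        cmod ((\<Prod>i=1..n-1. (1 - (u * of_real (bcoef n d s i)) ^ DD d i) powi ((-1::int)^(i-1))) - 1)
          \<le> e4 s"
      and e2_small: "e2 s < c / 2" and rz: "r \<le> cmod z"
      and reg: "Qn_regular n d s (X s) (Y s) (Z s) z" and hreg: "h_regular (d 1) z"
    have z: "z \<noteq> 0" using r rz by auto
    have u: "cmod (1/z) \<le> R"
      using r rz unfolding R_def by (simp add: norm_divide frac_le)
    from chordal_Qn_hmap_le[OF z u reg hreg prod_s[rule_format, OF u]]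
      e2_small[unfolded e2_def e1_def M_def c_def]
    show "chordal (Qn n d s (X s) (Y s) (Z s) (W s) z) (hmap (d 1) z) \<le> g s"
      unfolding g_def e2_def e1_def M_def c_def .
  qed
  with g show "\<exists>g. (g \<longlongrightarrow> 0) (at_right 0) \<and> (\<forall>\<^sub>F s in at_right 0. \<forall>z. r \<le> cmod z \<longrightarrow>
      Qn_regular n d s (X s) (Y s) (Z s) z \<longrightarrow> h_regular (d 1) z \<longrightarrow>
      chordal (Qn n d s (X s) (Y s) (Z s) (W s) z) (hmap (d 1) z) \<le> g s)"
    by (intro exI conjI)
qed

lemma chordal_Qhat_hmap_le:
  fixes z :: complex and s X Y Z W e4 R :: real
  defines "\<sigma> \<equiv> s powr nu n d"
  defines "e3 \<equiv> (real (d 1) - 1) * \<bar>X\<bar> * (\<sigma> * R) ^ d 1 + \<bar>Y\<bar> * (\<sigma> * R) + \<bar>Z - 1\<bar>"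
  assumes s: "s > 0" and z: "z \<noteq> 0" and u: "cmod (1/z) \<le> R"
    and reg: "Qhat_regular n d s X Y Z W z" and hreg: "h_regular (d n) z"
    and \<rho>_close: "cmod ((\<Prod>i=1..n-1. (1 - (1/z * of_real (\<sigma> / bcoef n d s i)) ^ DD d i)
                          powi ((-1::int)^(i-1))) - 1) \<le> e4"
    and e3_small: "e3 \<le> 1/2"
  shows "chordal (Qhat n d s X Y Z W z) (hmap (d n) z)
           \<le> 2 * (\<bar>W / \<sigma> - (real (d n) - 1) / real (d n)\<bar> + R ^ d n / real (d n) * (2 * (e4 + e3)))"
proof -
  define u where "u = 1/z"
  define w where "w = of_real \<sigma> / z"
  define dn where "dn = real (d n)"
  define D where "D = (of_nat (d 1) - 1) * of_real X * w ^ d 1 + of_real Y * w + of_real Z"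
  define \<rho> where "\<rho> = (\<Prod>i=1..n-1. (1 - (w / of_real (bcoef n d s i)) ^ DD d i) powi ((-1::int)^(i-1)))"
  define A where "A = u ^ d n * \<rho> / (of_real dn * D) + of_real (W / \<sigma>)"
  define B where "B = of_real ((dn - 1) / dn) + u ^ d n / of_real dn"
  have \<sigma>: "\<sigma> > 0" using s by (simp add: \<sigma>_def)
  have dn1: "dn > 1" using dn_gt_1 dn_def by simp
  have wu: "w = u * of_real \<sigma>" by (simp add: w_def u_def)
  have QA: "Qn n d s X Y Z W w = of_real \<sigma> * A"
    using Qn_eq_near_zero[OF s z, of X Y Z W]
    by (simp add: A_def \<rho>_def D_def u_def w_def dn_def \<sigma>_def)
  moreover have "Qn n d s X Y Z W w \<noteq> 0"
    using reg by (simp add: Qhat_regular_def w_def \<sigma>_def)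
  ultimately have A: "A \<noteq> 0" by simp
  have Qhat: "Qhat n d s X Y Z W z = 1 / A"
    using QA A \<sigma> by (simp add: Qhat_def w_def \<sigma>_def)
  have B_eq: "B = ((of_nat (d n) - 1) + u ^ d n) / of_nat (d n)"
    using dn1 by (simp add: B_def dn_def field_simps)
  have B: "B \<noteq> 0"
    using h_regular_imp_nonzero[OF z hreg] dn1 by (simp add: B_eq u_def dn_def)
  have h: "hmap (d n) z = 1 / B" using hmap_eq_at_inverse[OF z] by (simp add: B_eq u_def)
  have "cmod (u ^ d n) \<le> R ^ d n" using u by (simp add: u_def norm_power power_mono)
  moreover have "cmod (D - 1) \<le> e3"
  proof -
    have "cmod w = \<sigma> * cmod (1/z)" using \<sigma> by (simp add: w_def norm_divide)
    then have "cmod w \<le> \<sigma> * R" using u \<sigma> by (simp add: mult_left_mono)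
    then show ?thesis
      using norm_trinomial_minus_1_le[where c="real (d 1)" and k="d 1"] d1_gt_1
      by (simp add: D_def e3_def)
  qed
  moreover have "cmod (\<rho> - 1) \<le> e4"
  proof -
    have ratio: "w / of_real (bcoef n d s i) = 1/z * of_real (\<sigma> / bcoef n d s i)"
      if "i \<in> {1..n-1}" for i
      using bcoef_pos_ln[OF s dmax_pos tau_pos] that by (simp add: wu u_def)
    have "\<rho> = (\<Prod>i=1..n-1. (1 - (1/z * of_real (\<sigma> / bcoef n d s i)) ^ DD d i)
                 powi ((-1::int)^(i-1)))"
      unfolding \<rho>_def by (rule prod.cong[OF refl]) (simp only: ratio)
    then show ?thesis using \<rho>_close by simp
  qed
  ultimately have "chordal (1 / A) (1 / B) \<le> 2 * (\<bar>W / \<sigma> - (dn - 1) / dn\<bar> + R ^ d n / dn * (2 * (e4 + e3)))"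
    using chordal_inverse_perturbation_le[of dn "u ^ d n" "R ^ d n" \<rho> e4 D e3 "W / \<sigma>" "(dn - 1) / dn"]
      dn1 e3_small A B unfolding A_def B_def by simp
  then show ?thesis unfolding Qhat h dn_def .
qed

lemma Qhat_loc_unif_conv_hmap:
  fixes X Y Z W :: "real \<Rightarrow> real"
  assumes X: "(X \<longlongrightarrow> 1) (at_right 0)" and Y: "(Y \<longlongrightarrow> 0) (at_right 0)"
    and Z: "(Z \<longlongrightarrow> 1) (at_right 0)"
    and W: "((\<lambda>s. W s / s powr nu n d) \<longlongrightarrow> (real (d n) - 1) / real (d n)) (at_right 0)"
  shows "loc_unif_conv_sphere (\<lambda>s. Qhat n d s (X s) (Y s) (Z s) (W s))
     (\<lambda>s. Qhat_regular n d s (X s) (Y s) (Z s) (W s)) (hmap (d n)) (h_regular (d n))"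
proof (rule loc_unif_conv_sphereI)
  fix r :: real assume r: "r > 0"
  define R where "R = 1/r"
  define \<sigma> where "\<sigma> s = s powr nu n d" for s :: real
  have "\<exists>e4. (e4 \<longlongrightarrow> 0) (at_right 0) \<and> (\<forall>\<^sub>F s in at_right 0. \<forall>u::complex. cmod u \<le> R \<longrightarrow>
        cmod ((\<Prod>i=1..n-1. (1 - (u * of_real (\<sigma> s / bcoef n d s i)) ^ DD d i) powi ((-1::int)^(i-1))) - 1)
          \<le> e4 s)"
    unfolding \<sigma>_def
    by (rule uniformly_tendsto_prod_powi_sign[where f="\<lambda>i s. s powr nu n d / bcoef n d s i"])
       (auto intro: DD_pos sigma_div_bcoef_tendsto_0)
  then obtain e4 where e4: "(e4 \<longlongrightarrow> 0) (at_right 0)"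
    and prod_near_1: "\<forall>\<^sub>F s in at_right 0. \<forall>u::complex. cmod u \<le> R \<longrightarrow>
        cmod ((\<Prod>i=1..n-1. (1 - (u * of_real (\<sigma> s / bcoef n d s i)) ^ DD d i) powi ((-1::int)^(i-1))) - 1)
          \<le> e4 s"
    by blast
  define e3 where "e3 s = (real (d 1) - 1) * \<bar>X s\<bar> * (\<sigma> s * R) ^ d 1 + \<bar>Y s\<bar> * (\<sigma> s * R) + \<bar>Z s - 1\<bar>" for s
  define k where "k = (real (d n) - 1) / real (d n)"
  define g where "g s = 2 * (\<bar>W s / \<sigma> s - k\<bar> + R ^ d n / real (d n) * (2 * (e4 s + e3 s)))" for s
  have \<sigma>: "(\<sigma> \<longlongrightarrow> 0) (at_right 0)" unfolding \<sigma>_def by (rule sigma_tendsto_0)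
  have "(e3 \<longlongrightarrow> (real (d 1) - 1) * \<bar>1\<bar> * (0 * R) ^ d 1 + \<bar>0\<bar> * (0 * R) + \<bar>1 - 1\<bar>) (at_right 0)"
    unfolding e3_def by (intro tendsto_intros X Y Z \<sigma>)
  moreover have "d 1 > 0" using d1_gt_1 by simp
  ultimately have e3: "(e3 \<longlongrightarrow> 0) (at_right 0)" by (simp add: power_0_left)
  have "(g \<longlongrightarrow> 2 * (\<bar>k - k\<bar> + R ^ d n / real (d n) * (2 * (0 + 0)))) (at_right 0)"
    unfolding g_def using W
    by (intro tendsto_mult tendsto_add tendsto_divide tendsto_const tendsto_rabs tendsto_diff e4 e3)
       (auto simp: \<sigma>_def k_def)
  then have g: "(g \<longlongrightarrow> 0) (at_right 0)" by simp
  have "\<forall>\<^sub>F s in at_right 0. e3 s < 1/2" by (rule order_tendstoD(2)[OF e3]) simp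
  with prod_near_1 eventually_at_right_less[of "0::real"]
  have "\<forall>\<^sub>F s in at_right 0. \<forall>z. r \<le> cmod z \<longrightarrow> Qhat_regular n d s (X s) (Y s) (Z s) (W s) z \<longrightarrow>
      h_regular (d n) z \<longrightarrow> chordal (Qhat n d s (X s) (Y s) (Z s) (W s) z) (hmap (d n) z) \<le> g s"
  proof (eventually_elim, intro allI impI)
    fix s z
    assume prod_s: "\<forall>u::complex. cmod u \<le> R \<longrightarrow>
        cmod ((\<Prod>i=1..n-1. (1 - (u * of_real (\<sigma> s / bcoef n d s i)) ^ DD d i) powi ((-1::int)^(i-1))) - 1)
          \<le> e4 s"
      and s: "s > 0" and e3_small: "e3 s < 1/2" and rz: "r \<le> cmod z"
      and reg: "Qhat_regular n d s (X s) (Y s) (Z s) (W s) z" and hreg: "h_regular (d n) z"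
    have z: "z \<noteq> 0" using r rz by auto
    have u: "cmod (1/z) \<le> R"
      using r rz unfolding R_def by (simp add: norm_divide frac_le)
    have "e3 s \<le> 1/2" using e3_small by simp
    from chordal_Qhat_hmap_le[OF s z u reg hreg prod_s[rule_format, OF u, unfolded \<sigma>_def]
        this[unfolded e3_def \<sigma>_def]]
    show "chordal (Qhat n d s (X s) (Y s) (Z s) (W s) z) (hmap (d n) z) \<le> g s"
      unfolding g_def e3_def \<sigma>_def k_def .
  qed
  with g show "\<exists>g. (g \<longlongrightarrow> 0) (at_right 0) \<and> (\<forall>\<^sub>F s in at_right 0. \<forall>z. r \<le> cmod z \<longrightarrow>
      Qhat_regular n d s (X s) (Y s) (Z s) (W s) z \<longrightarrow> h_regular (d n) z \<longrightarrow>
      chordal (Qhat n d s (X s) (Y s) (Z s) (W s) z) (hmap (d n) z) \<le> g s)"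
    by (intro exI conjI)
qed

end

theorem lemma3p4:
  fixes n :: nat and d :: "nat \<Rightarrow> nat" and X Y Z W :: "real \<Rightarrow> real"
  assumes "odd n" and "n \<ge> 3"
    and "\<forall>i\<in>{1..n}. d i > 0"
    and "(\<Sum>i=1..n. 1 / real (d i)) < 1"
    and "\<forall>\<^sub>F s in at_right 0.
           Qn n d s (X s) (Y s) (Z s) (W s) 1 = 1 \<and>
           (Qn n d s (X s) (Y s) (Z s) (W s) has_field_derivative 1) (at 1) \<and>
           Qn n d s (X s) (Y s) (Z s) (W s) (of_real (s powr nu n d)) = of_real (s powr nu n d) \<and>
           (Qn n d s (X s) (Y s) (Z s) (W s) has_field_derivative 1) (at (of_real (s powr nu n d)))"
    and "((\<lambda>s. (X s - 1) / s powr nu n d) \<longlongrightarrow>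
           real (d 1) * (real (d 1) - 3) * (real (d n) - 1) / ((real (d 1) - 1)\<^sup>2 * real (d n)))
           (at_right 0)"
    and "((\<lambda>s. Y s / s powr nu n d) \<longlongrightarrow>
           2 * real (d 1) * (real (d n) - 1) / ((real (d 1) - 1) * real (d n))) (at_right 0)"
    and "((\<lambda>s. (Z s - 1) / s powr nu n d) \<longlongrightarrow> 0) (at_right 0)"
    and "((\<lambda>s. W s / s powr nu n d) \<longlongrightarrow> (real (d n) - 1) / real (d n)) (at_right 0)"
  shows "loc_unif_conv_sphere
           (\<lambda>s. Qn n d s (X s) (Y s) (Z s) (W s)) (\<lambda>s. Qn_regular n d s (X s) (Y s) (Z s))
           (hmap (d 1)) (h_regular (d 1))
       \<and> loc_unif_conv_sphere
           (\<lambda>s. Qhat n d s (X s) (Y s) (Z s) (W s)) (\<lambda>s. Qhat_regular n d s (X s) (Y s) (Z s) (W s))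
           (hmap (d n)) (h_regular (d n))"
proof -
  interpret degree_data n d using assms(1-4) by unfold_locales
  have \<sigma>: "((\<lambda>s. s powr nu n d) \<longlongrightarrow> 0) (at_right 0)" by (rule sigma_tendsto_0)
  have \<sigma>_nonzero: "\<forall>\<^sub>F s in at_right 0. s powr nu n d \<noteq> 0"
    using eventually_at_right_less[of "0::real"] by eventually_elim simp
  note tendsto_unscaled = tendsto_of_tendsto_scaled_diff[OF _ \<sigma> \<sigma>_nonzero]
  have "(X \<longlongrightarrow> 1) (at_right 0)" by (rule tendsto_unscaled[OF assms(6)])
  moreover have "(Y \<longlongrightarrow> 0) (at_right 0)" by (rule tendsto_unscaled) (use assms(7) in simp)
  moreover have "(Z \<longlongrightarrow> 1) (at_right 0)" by (rule tendsto_unscaled[OF assms(8)])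
  moreover have "(W \<longlongrightarrow> 0) (at_right 0)" by (rule tendsto_unscaled) (use assms(9) in simp)
  ultimately show ?thesis
    using Qn_loc_unif_conv_hmap Qhat_loc_unif_conv_hmap[OF _ _ _ assms(9)] by simp
qed

end
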